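(* Let $\mathcal{A}$ be a parity game arena and $\mathcal{A}_\bot$ its escape arena. For $i\in\{0,1\}$ and every vertex $s\in V$, player $i$ wins $s$ in the parity game on $\mathcal{A}$ if and only if player $i$ wins $s$ in $\mathcal{A}_\bot$.
   Context: Parity game arena: $\mathcal{A}=(V,E,o,c)$ with $V$ finite, $E\subseteq V\times V$, every vertex has a successor, owner map $o:V\to\{0,1\}$, colouring $c:V\to\{0,\dots,d-1\}$; $V_i=o^{-1}(i)$. A (memoryless) strategy of player $i$ is a set $\sigma$ of edges leaving $V_i$ with at least one edge out of each vertex of $V_i$ that has a successor; $\mathcal{A}|_\sigma$ keeps all edges of the other player and only the edges in $\sigma$ for player $i$. In the parity game on $\mathcal{A}$ plays are infinite paths, an infinite play is won by player $0$ iff the largest colour occurring infinitely often is even, and player $i$ wins $s$ if he has a strategy $\sigma$ such that he wins every play from $s$ in $\mathcal{A}|_\sigma$. Escape arena $\mathcal{A}_\bot$: vertices $V\cup\{\bot\}$, edges $E\cup(V_0\times\{\bot\})$, $\bot$ owned by player $0$ with no outgoing edges; plays are maximal paths (infinite or ending in $\bot$). Colour profiles $\mathcal{P}=\mathbb{Z}^d\cup\{-\infty,\infty\}$: a finite play $\pi$ ending in $\bot$ has value $\wp(\pi)\in\mathbb{Z}^d$ whose $k$-th coordinate counts the vertices of $V$ on $\pi$ with colour $k$; an infinite play has value $\infty$ if won by player $0$ under the parity condition and $-\infty$ otherwise. Total order $\prec$: $-\infty$ least, $\infty$ greatest; for distinct $p,p'\in\mathbb{Z}^d$ with $k$ the largest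 index where they differ, $p\prec p'$ iff ($k$ even and $p_k<p'_k$) or ($k$ odd and $p_k>p'_k$). Let $\overline{\wp}$ be the $\prec$-maximal value of an acyclic path in $\mathcal{A}_\bot$ ending in $\bot$ (taken to be $-\infty$ if there is none). In $\mathcal{A}_\bot$, player $0$ wins a play $\pi$ iff $\wp(\pi)\succ\overline{\wp}$, otherwise player $1$ wins it; player $i$ wins a vertex $s$ in $\mathcal{A}_\bot$ if he has a strategy $\sigma$ in $\mathcal{A}_\bot$ such that he wins every play from $s$ in $\mathcal{A}_\bot|_\sigma$. *)

theory Defs
  imports Main
begin

definition strategy :: "('a \<times> 'a) set \<Rightarrow> ('a \<Rightarrow> nat) \<Rightarrow> nat \<Rightarrow> ('a \<times> 'a) set \<Rightarrow> bool" where
  "strategy E own i \<sigma> \<longleftrightarrow>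
     \<sigma> \<subseteq> E \<and> (\<forall>(u, w) \<in> \<sigma>. own u = i) \<and>
     (\<forall>u. own u = i \<and> (\<exists>w. (u, w) \<in> E) \<longrightarrow> (\<exists>w. (u, w) \<in> \<sigma>))"

definition restr :: "('a \<times> 'a) set \<Rightarrow> ('a \<Rightarrow> nat) \<Rightarrow> nat \<Rightarrow> ('a \<times> 'a) set \<Rightarrow> ('a \<times> 'a) set" where
  "restr E own i \<sigma> = {(u, w) \<in> E. own u \<noteq> i} \<union> \<sigma>"

definition inf_path :: "('a \<times> 'a) set \<Rightarrow> 'a \<Rightarrow> (nat \<Rightarrow> 'a) \<Rightarrow> bool" where
  "inf_path E s p \<longleftrightarrow> p 0 = s \<and> (\<forall>n. (p n, p (Suc n)) \<in> E)"

definition fin_path :: "('a \<times> 'a) set \<Rightarrow> 'a list \<Rightarrow> bool" where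
  "fin_path E xs \<longleftrightarrow> xs \<noteq> [] \<and> (\<forall>j. Suc j < length xs \<longrightarrow> (xs ! j, xs ! Suc j) \<in> E)"

definition fin_max_path :: "('a \<times> 'a) set \<Rightarrow> 'a \<Rightarrow> 'a list \<Rightarrow> bool" where
  "fin_max_path E s xs \<longleftrightarrow> fin_path E xs \<and> hd xs = s \<and> \<not> (\<exists>w. (last xs, w) \<in> E)"

definition parity_arena :: "'v set \<Rightarrow> ('v \<times> 'v) set \<Rightarrow> ('v \<Rightarrow> nat) \<Rightarrow> ('v \<Rightarrow> nat) \<Rightarrow> nat \<Rightarrow> bool" where
  "parity_arena V E own col d \<longleftrightarrow>
     finite V \<and> E \<subseteq> V \<times> V \<and> (\<forall>v \<in> V. \<exists>w. (v, w) \<in> E) \<and>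
     (\<forall>v \<in> V. own v \<in> {0, 1}) \<and> (\<forall>v \<in> V. col v < d)"

definition parity_win0 :: "('v \<Rightarrow> nat) \<Rightarrow> (nat \<Rightarrow> 'v) \<Rightarrow> bool" where
  "parity_win0 col p \<longleftrightarrow> even (Max {k. \<exists>\<^sub>\<infinity>n. col (p n) = k})"

definition wins_parity :: "('v \<times> 'v) set \<Rightarrow> ('v \<Rightarrow> nat) \<Rightarrow> ('v \<Rightarrow> nat) \<Rightarrow> nat \<Rightarrow> 'v \<Rightarrow> bool" where
  "wins_parity E own col i s \<longleftrightarrow>
     (\<exists>\<sigma>. strategy E own i \<sigma> \<and>
        (\<forall>p. inf_path (restr E own i \<sigma>) s p \<longrightarrow>
             (if i = 0 then parity_win0 col p else \<not> parity_win0 col p)))"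

section \<open>Escape arena (None plays the role of bottom)\<close>

definition esc_edges :: "'v set \<Rightarrow> ('v \<times> 'v) set \<Rightarrow> ('v \<Rightarrow> nat) \<Rightarrow> ('v option \<times> 'v option) set" where
  "esc_edges V E own = (\<lambda>(u, w). (Some u, Some w)) ` E \<union> {(Some v, None) | v. v \<in> V \<and> own v = 0}"

definition esc_own :: "('v \<Rightarrow> nat) \<Rightarrow> 'v option \<Rightarrow> nat" where
  "esc_own own x = (case x of None \<Rightarrow> 0 | Some v \<Rightarrow> own v)"

text \<open>Elements of Z^d are represented as integer lists of length d.\<close>
datatype profile = NegInf | Fin "int list" | PosInf

definition prof_less :: "nat \<Rightarrow> profile \<Rightarrow> profile \<Rightarrow> bool" where
  "prof_less d p q \<longleftrightarrow>
     (case (p, q) of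
        (NegInf, NegInf) \<Rightarrow> False
      | (NegInf, _) \<Rightarrow> True
      | (PosInf, _) \<Rightarrow> False
      | (Fin _, NegInf) \<Rightarrow> False
      | (Fin _, PosInf) \<Rightarrow> True
      | (Fin a, Fin b) \<Rightarrow>
          (\<exists>k < d. a ! k \<noteq> b ! k \<and> (\<forall>j. k < j \<and> j < d \<longrightarrow> a ! j = b ! j) \<and>
                   ((even k \<and> a ! k < b ! k) \<or> (odd k \<and> a ! k > b ! k))))"

definition fin_value :: "('v \<Rightarrow> nat) \<Rightarrow> nat \<Rightarrow> 'v option list \<Rightarrow> profile" where
  "fin_value col d xs =
     Fin (map (\<lambda>k. int (length (filter (\<lambda>x. x \<noteq> None \<and> col (the x) = k) xs))) [0..<d])"

text \<open>Value of an infinite play (infinite plays never visit bottom).\<close>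
definition inf_value :: "('v \<Rightarrow> nat) \<Rightarrow> (nat \<Rightarrow> 'v option) \<Rightarrow> profile" where
  "inf_value col p = (if parity_win0 col (the \<circ> p) then PosInf else NegInf)"

definition prof_max :: "nat \<Rightarrow> profile set \<Rightarrow> profile" where
  "prof_max d S = (if S = {} then NegInf else
     (THE p. p \<in> S \<and> (\<forall>q \<in> S. q \<noteq> p \<longrightarrow> prof_less d q p)))"

definition acyc_bound :: "'v set \<Rightarrow> ('v \<times> 'v) set \<Rightarrow> ('v \<Rightarrow> nat) \<Rightarrow> ('v \<Rightarrow> nat) \<Rightarrow> nat \<Rightarrow> profile" where
  "acyc_bound V E own col d = prof_max d
     {fin_value col d xs | xs. fin_path (esc_edges V E own) xs \<and> distinct xs \<and> last xs = None}"

definition wins_escape :: "'v set \<Rightarrow> ('v \<times> 'v) set \<Rightarrow> ('v \<Rightarrow> nat) \<Rightarrow> ('v \<Rightarrow> nat) \<Rightarrow> nat \<Rightarrow> nat \<Rightarrow> 'v \<Rightarrow> bool" where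
  "wins_escape V E own col d i s \<longleftrightarrow>
     (let Eb = esc_edges V E own; ob = esc_own own; B = acyc_bound V E own col d;
          win = (\<lambda>val. if i = 0 then prof_less d B val else \<not> prof_less d B val) in
     (\<exists>\<sigma>. strategy Eb ob i \<sigma> \<and>
        (\<forall>p. inf_path (restr Eb ob i \<sigma>) (Some s) p \<longrightarrow> win (inf_value col p)) \<and>
        (\<forall>xs. fin_max_path (restr Eb ob i \<sigma>) (Some s) xs \<longrightarrow> win (fin_value col d xs))))"

end

theory Submission
  imports Defs "HOL-Library.Infinite_Set"
begin

text \<open>A strategy on the arena is also a strategy on the escape arena, and a strategy on the
escape arena becomes one on the arena once escape moves are replaced by arbitrary moves. The
infinite plays of the two games correspond, and since the bound is a finite profile they are won
by the same player; so only plays ending in bottom need an argument. A winning escape strategy of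
player 0 never escapes at a reachable vertex: otherwise player 1 could steer the play along an
acyclic path into bottom, whose value is at most the bound. If player 1 wins the parity game, a
repeated vertex on a play into bottom closes a cycle that, repeated forever, yields a play he
wins; so the largest colour on the cycle is odd and cutting the cycle out increases the value.
Removing cycles one by one bounds the value of the play by that of an acyclic one, hence by the
bound.\<close>

lemma fin_path_Cons:
  "fin_path R (x # xs) \<longleftrightarrow> xs = [] \<or> (x, hd xs) \<in> R \<and> fin_path R xs"
  unfolding fin_path_def
  by (cases xs) (auto simp: nth_Cons' less_Suc_eq_0_disj)

lemma fin_path_append:
  assumes "xs \<noteq> []" "ys \<noteq> []"
  shows "fin_path R (xs @ ys) \<longleftrightarrow> fin_path R xs \<and> fin_path R ys \<and> (last xs, hd ys) \<in> R"
  using assms(1)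
proof (induction xs)
  case (Cons x xs)
  then show ?case using assms(2) by (cases "xs = []") (auto simp: fin_path_Cons)
qed simp

lemma fin_path_mono: "R \<subseteq> R' \<Longrightarrow> fin_path R xs \<Longrightarrow> fin_path R' xs"
  unfolding fin_path_def by blast

lemma fin_path_appendD1: "fin_path R (xs @ ys) \<Longrightarrow> xs \<noteq> [] \<Longrightarrow> fin_path R xs"
  by (cases "ys = []") (simp_all add: fin_path_append)

lemma fin_path_appendD2: "fin_path R (xs @ ys) \<Longrightarrow> ys \<noteq> [] \<Longrightarrow> fin_path R ys"
  by (cases "xs = []") (simp_all add: fin_path_append)

lemma fin_path_remove_cycle:
  assumes "fin_path R (xs @ y # ys @ y # zs)"
  shows "fin_path R (xs @ y # zs)"
proof -
  have "fin_path R ((xs @ [y]) @ ys @ y # zs)" using assms by simp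
  then have pre: "fin_path R (xs @ [y])" by (rule fin_path_appendD1) simp
  have "fin_path R ((xs @ y # ys) @ y # zs)" using assms by simp
  then have post: "fin_path R (y # zs)" by (rule fin_path_appendD2) simp
  show ?thesis
  proof (cases "zs = []")
    case True
    then show ?thesis using pre by simp
  next
    case False
    then have "fin_path R ((xs @ [y]) @ zs)"
      using pre post by (subst fin_path_append) (simp_all add: fin_path_Cons)
    then show ?thesis by simp
  qed
qed

lemma rtrancl_imp_distinct_fin_path:
  "(a, b) \<in> R\<^sup>* \<Longrightarrow> \<exists>xs. fin_path R xs \<and> hd xs = a \<and> last xs = b \<and> distinct xs"
proof (induction rule: converse_rtrancl_induct)
  case base
  show ?case by (rule exI[of _ "[b]"]) (simp add: fin_path_def)
next
  case (step a a')
  then obtain xs where xs: "fin_path R xs" "hd xs = a'" "last xs = b" "distinct xs" by blast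
  show ?case
  proof (cases "a \<in> set xs")
    case True
    then obtain ys zs where split: "xs = ys @ a # zs" by (meson split_list)
    then have "fin_path R (a # zs)"
      using xs(1) fin_path_append[of ys "a # zs" R] by (cases "ys = []") simp_all
    then show ?thesis using split xs by (intro exI[of _ "a # zs"]) simp
  next
    case False
    have "xs \<noteq> []" using xs(1) by (simp add: fin_path_def)
    then show ?thesis using False xs step(1)
      by (intro exI[of _ "a # xs"]) (simp add: fin_path_Cons)
  qed
qed

section \<open>Lassos\<close>

definition lasso :: "'a list \<Rightarrow> 'a list \<Rightarrow> nat \<Rightarrow> 'a" where
  "lasso pre cyc n = (if n < length pre then pre ! n else cyc ! ((n - length pre) mod length cyc))"

lemma limit_values_lasso:
  assumes "cyc \<noteq> []"
  shows "{k. \<exists>\<^sub>\<infinity>n. f (lasso pre cyc n) = k} = f ` set cyc"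
proof (intro equalityI subsetI)
  fix k assume "k \<in> {k. \<exists>\<^sub>\<infinity>n. f (lasso pre cyc n) = k}"
  then obtain n where "n > length pre" "f (lasso pre cyc n) = k"
    unfolding INFM_nat by blast
  then show "k \<in> f ` set cyc" using assms unfolding lasso_def by (auto intro!: image_eqI nth_mem)
next
  fix k assume "k \<in> f ` set cyc"
  then obtain i where i: "i < length cyc" "k = f (cyc ! i)" by (auto simp: in_set_conv_nth)
  have "f (lasso pre cyc (length pre + i + length cyc * m)) = k" for m
    using i unfolding lasso_def by simp
  moreover have "m < length pre + i + length cyc * Suc m" for m
    using assms by (cases cyc) auto
  ultimately show "k \<in> {k. \<exists>\<^sub>\<infinity>n. f (lasso pre cyc n) = k}"
    unfolding INFM_nat by blast
qed

lemma inf_path_lasso: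
  assumes path: "fin_path R (pre @ cyc @ [hd cyc])" and "cyc \<noteq> []"
  shows "inf_path R (hd (pre @ cyc)) (lasso pre cyc)"
  unfolding inf_path_def
proof (intro conjI allI)
  let ?Z = "pre @ cyc @ [hd cyc]" and ?L = "length pre" and ?C = "length cyc"
  show "lasso pre cyc 0 = hd (pre @ cyc)"
    using assms(2) unfolding lasso_def by (cases pre) (auto simp: hd_conv_nth)
  fix n
  have C: "?C > 0" using assms(2) by simp
  have "\<exists>j. Suc j < length ?Z \<and> ?Z ! j = lasso pre cyc n \<and> ?Z ! Suc j = lasso pre cyc (Suc n)"
  proof (cases "n < ?L")
    case True
    then show ?thesis using C
      by (intro exI[of _ n]) (auto simp: lasso_def nth_append not_less_eq)
  next
    case False
    define r where "r = (n - ?L) mod ?C"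
    have r: "r < ?C" using C r_def by simp
    have "(Suc n - ?L) mod ?C = Suc r mod ?C"
      using False by (simp add: r_def Suc_diff_le mod_Suc_eq)
    then have succ: "lasso pre cyc (Suc n) = cyc ! (if Suc r = ?C then 0 else Suc r)"
      using False r unfolding lasso_def by (simp add: mod_Suc)
    have "lasso pre cyc n = ?Z ! (?L + r)"
      using False r unfolding lasso_def r_def by (simp add: nth_append)
    moreover have "?Z ! Suc (?L + r) = lasso pre cyc (Suc n)"
      using r assms(2) by (cases "Suc r = ?C") (simp_all add: succ nth_append hd_conv_nth)
    ultimately show ?thesis using r by (intro exI[of _ "?L + r"]) simp
  qed
  then show "(lasso pre cyc n, lasso pre cyc (Suc n)) \<in> R"
    using path unfolding fin_path_def by metis
qed

section \<open>The order on colour profiles\<close>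

lemma prof_less_irrefl: "\<not> prof_less d p p"
  by (cases p) (auto simp: prof_less_def)

lemma not_prof_less_NegInf: "\<not> prof_less d p NegInf"
  by (cases p) (auto simp: prof_less_def)

lemma prof_less_trans:
  assumes "prof_less d p q" "prof_less d q r"
  shows "prof_less d p r"
proof (cases p; cases q; cases r)
  fix a b c assume Fin: "p = Fin a" "q = Fin b" "r = Fin c"
  obtain k where k: "k < d" "a!k \<noteq> b!k" "\<forall>j. k < j \<and> j < d \<longrightarrow> a!j = b!j"
    "even k \<and> a!k < b!k \<or> odd k \<and> a!k > b!k"
    using assms(1) Fin by (auto simp: prof_less_def)
  obtain l where l: "l < d" "b!l \<noteq> c!l" "\<forall>j. l < j \<and> j < d \<longrightarrow> b!j = c!j"
    "even l \<and> b!l < c!l \<or> odd l \<and> b!l > c!l"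
    using assms(2) Fin by (auto simp: prof_less_def)
  have "\<exists>m<d. a!m \<noteq> c!m \<and> (\<forall>j. m < j \<and> j < d \<longrightarrow> a!j = c!j) \<and>
      (even m \<and> a!m < c!m \<or> odd m \<and> a!m > c!m)"
  proof (cases "k \<le> l")
    case True
    then show ?thesis using k l by (intro exI[of _ l]) (auto simp: le_less)
  next
    case False
    then show ?thesis using k l by (intro exI[of _ k]) auto
  qed
  then show ?thesis using Fin by (simp add: prof_less_def)
qed (use assms in \<open>simp_all add: prof_less_def\<close>)

lemma prof_less_asym: "prof_less d p q \<Longrightarrow> \<not> prof_less d q p"
  using prof_less_trans prof_less_irrefl by blast

lemma prof_less_total:
  assumes "length a = d" "length b = d" "a \<noteq> b"
  shows "prof_less d (Fin a) (Fin b) \<or> prof_less d (Fin b) (Fin a)"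
proof -
  define K where "K = {k. k < d \<and> a!k \<noteq> b!k}"
  have "K \<noteq> {}" using assms nth_equalityI unfolding K_def by force
  then have k: "Max K < d" "a ! Max K \<noteq> b ! Max K"
    using Max_in[of K] unfolding K_def by auto
  have above: "\<forall>j. Max K < j \<and> j < d \<longrightarrow> a!j = b!j"
    using Max_ge[of K] unfolding K_def by fastforce
  show ?thesis
  proof (cases "even (Max K) \<longleftrightarrow> a ! Max K < b ! Max K")
    case True
    then have "prof_less d (Fin a) (Fin b)"
      unfolding prof_less_def prod.case profile.case
      using k above by (intro exI[of _ "Max K"]) auto
    then show ?thesis ..
  next
    case False
    then have "prof_less d (Fin b) (Fin a)"
      unfolding prof_less_def prod.case profile.case
      using k above by (intro exI[of _ "Max K"]) auto
    then show ?thesis ..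
  qed
qed

lemma finite_profiles_has_greatest:
  assumes "finite S" "S \<noteq> {}" "\<forall>p\<in>S. \<exists>a. p = Fin a \<and> length a = d"
  shows "\<exists>m\<in>S. \<forall>q\<in>S. q \<noteq> m \<longrightarrow> prof_less d q m"
  using assms
proof (induction S rule: finite_ne_induct)
  case (insert x F)
  then obtain m where m: "m \<in> F" "\<forall>q\<in>F. q \<noteq> m \<longrightarrow> prof_less d q m" by auto
  show ?case
  proof (cases "prof_less d m x")
    case True
    then have "prof_less d q x" if "q \<in> F" for q
      using m that prof_less_trans by (cases "q = m") blast+
    then show ?thesis by blast
  next
    case False
    obtain a b where "x = Fin a" "length a = d" "m = Fin b" "length b = d"
      using insert.prems m(1) by blast
    moreover have "x \<noteq> m" using m(1) insert.hyps by blast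
    ultimately have "prof_less d x m" using False prof_less_total by blast
    then show ?thesis using m by (intro bexI[of _ m]) auto
  qed
qed simp

lemma prof_max_greatest:
  assumes "finite S" "S \<noteq> {}" "\<forall>p\<in>S. \<exists>a. p = Fin a \<and> length a = d"
  shows "prof_max d S \<in> S" "q \<in> S \<Longrightarrow> \<not> prof_less d (prof_max d S) q"
proof -
  obtain m where m: "m \<in> S" "\<forall>q\<in>S. q \<noteq> m \<longrightarrow> prof_less d q m"
    using finite_profiles_has_greatest[OF assms] by blast
  have "(THE p. p \<in> S \<and> (\<forall>q\<in>S. q \<noteq> p \<longrightarrow> prof_less d q p)) = m"
  proof (rule the_equality)
    show "m \<in> S \<and> (\<forall>q\<in>S. q \<noteq> m \<longrightarrow> prof_less d q m)" using m by blast
    show "p = m" if "p \<in> S \<and> (\<forall>q\<in>S. q \<noteq> p \<longrightarrow> prof_less d q p)" for p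
      using that m prof_less_asym by (metis (no_types))
  qed
  then have "prof_max d S = m" using assms(2) by (simp add: prof_max_def)
  then show "prof_max d S \<in> S" using m(1) by simp
  show "\<not> prof_less d (prof_max d S) q" if "q \<in> S"
    using that m \<open>prof_max d S = m\<close> prof_less_asym prof_less_irrefl by metis
qed

lemma fin_value_remove_odd_cycle:
  assumes "cyc \<noteq> []" "None \<notin> set cyc" "\<forall>x\<in>set cyc. col (the x) < d"
    and odd: "odd (Max ((\<lambda>x. col (the x)) ` set cyc))"
  shows "prof_less d (fin_value col d (xs @ cyc @ ys)) (fin_value col d (xs @ ys))"
proof -
  define m where "m = Max ((\<lambda>x. col (the x)) ` set cyc)"
  define cnt where "cnt k l = length (filter (\<lambda>x. x \<noteq> None \<and> col (the x) = k) l)" for k l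
  have val: "fin_value col d l = Fin (map (\<lambda>k. int (cnt k l)) [0..<d])" for l
    unfolding fin_value_def cnt_def by simp
  have split: "cnt k (xs @ cyc @ ys) = cnt k (xs @ ys) + cnt k cyc" for k
    unfolding cnt_def by simp
  have "m \<in> (\<lambda>x. col (the x)) ` set cyc"
    unfolding m_def using assms(1) by (intro Max_in) auto
  then obtain x where x: "x \<in> set cyc" "col (the x) = m" by blast
  moreover have "x \<noteq> None" using x(1) assms(2) by metis
  ultimately have "m < d" "cnt m cyc > 0"
    using assms(3) unfolding cnt_def by (auto simp: filter_empty_conv)
  moreover have "cnt j cyc = 0" if "m < j" for j
  proof -
    have "col (the y) \<le> m" if "y \<in> set cyc" for y
      unfolding m_def using that by simp
    then show ?thesis using \<open>m < j\<close> unfolding cnt_def by (force simp: filter_empty_conv)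
  qed
  ultimately show ?thesis
    unfolding val prof_less_def prod.case profile.case using odd split
    by (intro exI[of _ m]) (auto simp: m_def)
qed

section \<open>Transferring strategies to and from the escape arena\<close>

definition lift :: "('v \<times> 'v) set \<Rightarrow> ('v option \<times> 'v option) set" where
  "lift \<sigma> = (\<lambda>(u, w). (Some u, Some w)) ` \<sigma>"

lemma mem_lift_iff:
  "(x, y) \<in> lift \<sigma> \<longleftrightarrow> (\<exists>u w. x = Some u \<and> y = Some w \<and> (u, w) \<in> \<sigma>)"
  unfolding lift_def by auto

definition unlift ::
    "('v \<times> 'v) set \<Rightarrow> ('v \<Rightarrow> nat) \<Rightarrow> nat \<Rightarrow> ('v option \<times> 'v option) set \<Rightarrow> ('v \<times> 'v) set"
  where "unlift E own i \<tau> =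
    {(u, w) \<in> E. own u = i \<and> ((Some u, Some w) \<in> \<tau> \<or> (Some u, None) \<in> \<tau>)}"

locale arena =
  fixes V :: "'v set" and E :: "('v \<times> 'v) set" and own col :: "'v \<Rightarrow> nat" and d :: nat
  assumes parity_arena: "parity_arena V E own col d"
begin

abbreviation "Ebot \<equiv> esc_edges V E own"
abbreviation "obot \<equiv> esc_own own"
abbreviation "bound \<equiv> acyc_bound V E own col d"

lemma edges_subset: "E \<subseteq> V \<times> V"
  and succ_exists: "v \<in> V \<Longrightarrow> \<exists>w. (v, w) \<in> E"
  and col_less: "v \<in> V \<Longrightarrow> col v < d"
  and finite_V: "finite V"
  using parity_arena unfolding parity_arena_def by auto

lemma Some_Some_in_Ebot [simp]: "(Some u, Some w) \<in> Ebot \<longleftrightarrow> (u, w) \<in> E"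
  and None_notin_Ebot [simp]: "(None, x) \<notin> Ebot"
  and Some_None_in_Ebot: "(Some u, None) \<in> Ebot \<longleftrightarrow> u \<in> V \<and> own u = 0"
  and obot_Some [simp]: "obot (Some u) = own u"
  unfolding esc_edges_def esc_own_def by auto

lemma Ebot_source: "(x, y) \<in> Ebot \<Longrightarrow> x \<in> Some ` V"
  and Ebot_target: "(x, y) \<in> Ebot \<Longrightarrow> y \<in> insert None (Some ` V)"
  unfolding esc_edges_def using edges_subset by auto

lemma fin_path_Ebot_butlast:
  "fin_path R xs \<Longrightarrow> R \<subseteq> Ebot \<Longrightarrow> set (butlast xs) \<subseteq> Some ` V"
  unfolding fin_path_def
  by (force simp: in_set_conv_nth nth_butlast dest: Ebot_source)

lemma fin_path_Ebot_last:
  assumes "fin_path R xs" "R \<subseteq> Ebot" "hd xs \<in> Some ` V"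
  shows "last xs \<in> insert None (Some ` V)"
proof (cases "butlast xs = []")
  case True
  then show ?thesis using assms(1,3) unfolding fin_path_def by (cases xs) auto
next
  case False
  have "xs = butlast xs @ [last xs]" using assms(1) by (simp add: fin_path_def)
  then have "(last (butlast xs), last xs) \<in> R"
    using assms(1) False fin_path_append[of "butlast xs" "[last xs]" R] by simp
  then show ?thesis using assms(2) Ebot_target by blast
qed

definition acyclic_values :: "profile set" where
  "acyclic_values =
     {fin_value col d xs | xs. fin_path Ebot xs \<and> distinct xs \<and> last xs = None}"

lemma finite_acyclic_values: "finite acyclic_values"
proof -
  let ?P = "{xs. fin_path Ebot xs \<and> distinct xs \<and> last xs = None}"
  have "set xs \<subseteq> insert None (Some ` V)" if "xs \<in> ?P" for xs
  proof -
    have "xs = butlast xs @ [None]"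
      using that append_butlast_last_id[of xs] by (simp add: fin_path_def)
    from arg_cong[OF this, of set] have "set xs = insert None (set (butlast xs))" by simp
    then show ?thesis using that fin_path_Ebot_butlast[of Ebot xs] by auto
  qed
  then have "?P \<subseteq> {xs. set xs \<subseteq> insert None (Some ` V) \<and> distinct xs}" by blast
  moreover have "finite {xs. set xs \<subseteq> insert None (Some ` V) \<and> distinct xs}"
    using finite_V by (intro finite_subset_distinct) simp
  ultimately have "finite ?P" by (rule finite_subset)
  moreover have "acyclic_values = fin_value col d ` ?P" unfolding acyclic_values_def by auto
  ultimately show ?thesis by simp
qed

lemma bound_in_acyclic_values: "bound \<in> acyclic_values"
  and not_bound_less_acyclic_value: "q \<in> acyclic_values \<Longrightarrow> \<not> prof_less d bound q"
proof -
  have "fin_value col d [None] \<in> acyclic_values"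
    unfolding acyclic_values_def by (auto simp: fin_path_def)
  moreover have "\<forall>p\<in>acyclic_values. \<exists>a. p = Fin a \<and> length a = d"
    unfolding acyclic_values_def fin_value_def by auto
  moreover have "bound = prof_max d acyclic_values"
    unfolding acyc_bound_def acyclic_values_def ..
  ultimately show "bound \<in> acyclic_values" "q \<in> acyclic_values \<Longrightarrow> \<not> prof_less d bound q"
    using prof_max_greatest[OF finite_acyclic_values, where d = d] by auto
qed

lemma bound_less_PosInf: "prof_less d bound PosInf"
  using bound_in_acyclic_values unfolding acyclic_values_def fin_value_def prof_less_def by auto

lemma not_bound_less_acyclic_path:
  "fin_path Ebot xs \<Longrightarrow> distinct xs \<Longrightarrow> last xs = None \<Longrightarrow>
    \<not> prof_less d bound (fin_value col d xs)"
  using not_bound_less_acyclic_value unfolding acyclic_values_def by blast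


lemma strategy_lift:
  assumes "strategy E own i \<sigma>"
  shows "strategy Ebot obot i (lift \<sigma>)"
  unfolding strategy_def
proof (intro conjI allI impI)
  show "lift \<sigma> \<subseteq> Ebot"
    using assms unfolding strategy_def lift_def by auto
  show "\<forall>(u, w)\<in>lift \<sigma>. obot u = i"
    using assms unfolding strategy_def lift_def by auto
  fix x assume "obot x = i \<and> (\<exists>y. (x, y) \<in> Ebot)"
  then obtain u where u: "x = Some u" "u \<in> V" "own u = i" using Ebot_source by force
  then obtain w where "(u, w) \<in> \<sigma>"
    using assms succ_exists unfolding strategy_def by blast
  then show "\<exists>y. (x, y) \<in> lift \<sigma>"
    using u(1) by (auto simp: mem_lift_iff)
qed

lemma restr_lift_subset: "\<sigma> \<subseteq> E \<Longrightarrow> restr Ebot obot i (lift \<sigma>) \<subseteq> Ebot"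
  unfolding restr_def lift_def esc_edges_def by blast

lemma Some_Some_in_restr_lift:
  "(Some u, Some w) \<in> restr Ebot obot i (lift \<sigma>) \<longleftrightarrow> (u, w) \<in> restr E own i \<sigma>"
  unfolding restr_def by (auto simp: mem_lift_iff)

lemma inf_path_lift:
  assumes "inf_path (restr Ebot obot i (lift \<sigma>)) (Some s) p" "\<sigma> \<subseteq> E"
  shows "inf_path (restr E own i \<sigma>) s (the \<circ> p)"
proof -
  have "(p n, p (Suc n)) \<in> Ebot" for n
    using assms restr_lift_subset unfolding inf_path_def by blast
  then have "p n = Some (the (p n))" for n
    using Ebot_source by (metis image_iff option.sel)
  then show ?thesis
    using assms(1) Some_Some_in_restr_lift unfolding inf_path_def by (metis comp_apply option.sel)
qed


lemma fin_max_path_lift_ends_in_bot: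
  assumes "strategy E own i \<sigma>" "s \<in> V" "fin_max_path (restr Ebot obot i (lift \<sigma>)) (Some s) xs"
  shows "last xs = None"
proof (rule ccontr)
  let ?R = "restr Ebot obot i (lift \<sigma>)"
  assume "last xs \<noteq> None"
  moreover have "?R \<subseteq> Ebot" using assms(1) restr_lift_subset unfolding strategy_def by blast
  moreover have "fin_path ?R xs" "hd xs \<in> Some ` V"
    using assms(2,3) unfolding fin_max_path_def by auto
  ultimately have "last xs \<in> Some ` V" using fin_path_Ebot_last by (metis insertE)
  then obtain v where v: "last xs = Some v" "v \<in> V" by blast
  then obtain w where w: "(v, w) \<in> E" using succ_exists by blast
  have "\<exists>w. (v, w) \<in> restr E own i \<sigma>"
  proof (cases "own v = i")
    case True
    then show ?thesis using assms(1) w unfolding strategy_def restr_def by blast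
  next
    case False
    then show ?thesis using w unfolding restr_def by blast
  qed
  then have "\<exists>y. (last xs, y) \<in> ?R" using v(1) Some_Some_in_restr_lift by metis
  then show False using assms(3) unfolding fin_max_path_def by blast
qed

lemma no_fin_max_path_lift0:
  assumes "strategy E own 0 \<sigma>" "s \<in> V"
  shows "\<not> fin_max_path (restr Ebot obot 0 (lift \<sigma>)) (Some s) xs"
proof
  let ?R = "restr Ebot obot 0 (lift \<sigma>)"
  assume max: "fin_max_path ?R (Some s) xs"
  then have path: "fin_path ?R xs" and "hd xs = Some s" "last xs = None"
    using fin_max_path_lift_ends_in_bot[OF assms] unfolding fin_max_path_def by auto
  moreover have "xs \<noteq> []" using path by (simp add: fin_path_def)
  ultimately obtain ys where ys: "xs = ys @ [None]" by (metis append_butlast_last_id)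
  moreover have "ys \<noteq> []" using ys \<open>hd xs = Some s\<close> by auto
  ultimately have "(last ys, None) \<in> ?R"
    using path fin_path_append[of ys "[None]" ?R] by simp
  then show False
    unfolding restr_def esc_edges_def lift_def by auto
qed

lemma strategy_unlift:
  assumes "strategy Ebot obot i \<tau>"
  shows "strategy E own i (unlift E own i \<tau>)"
  unfolding strategy_def
proof (intro conjI allI impI)
  show "unlift E own i \<tau> \<subseteq> E" "\<forall>(u, w)\<in>unlift E own i \<tau>. own u = i"
    unfolding unlift_def by auto
  fix u assume u: "own u = i \<and> (\<exists>w. (u, w) \<in> E)"
  then have "obot (Some u) = i \<and> (\<exists>y. (Some u, y) \<in> Ebot)"
    by (metis Some_Some_in_Ebot obot_Some)
  then obtain y where y: "(Some u, y) \<in> \<tau>"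
    using assms unfolding strategy_def by blast
  show "\<exists>w. (u, w) \<in> unlift E own i \<tau>"
  proof (cases y)
    case None
    then show ?thesis using u y unfolding unlift_def by blast
  next
    case (Some w)
    then have "(u, w) \<in> E" using y assms unfolding strategy_def by auto
    then show ?thesis using u y Some unfolding unlift_def by blast
  qed
qed

lemma inf_path_unlift1:
  assumes "strategy Ebot obot 1 \<tau>" "inf_path (restr E own 1 (unlift E own 1 \<tau>)) s q"
  shows "inf_path (restr Ebot obot 1 \<tau>) (Some s) (Some \<circ> q)"
proof -
  have "(Some u, None) \<notin> \<tau>" if "own u = 1" for u
    using assms(1) that Some_None_in_Ebot unfolding strategy_def by auto
  then show ?thesis using assms(2) unfolding inf_path_def restr_def unlift_def by auto
qed

lemma inf_path_unlift0:
  assumes "inf_path (restr E own 0 (unlift E own 0 \<tau>)) s q"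
    and no_escape: "\<forall>x. (Some s, x) \<in> (restr Ebot obot 0 \<tau>)\<^sup>* \<longrightarrow> (x, None) \<notin> \<tau>"
  shows "inf_path (restr Ebot obot 0 \<tau>) (Some s) (Some \<circ> q)"
proof -
  let ?R = "restr Ebot obot 0 \<tau>"
  have step: "(Some (q n), Some (q (Suc n))) \<in> ?R" if "(Some s, Some (q n)) \<in> ?R\<^sup>*" for n
    using assms that unfolding inf_path_def restr_def unlift_def by auto
  have "(Some s, Some (q n)) \<in> ?R\<^sup>*" for n
  proof (induction n)
    case 0
    then show ?case using assms(1) unfolding inf_path_def by simp
  next
    case (Suc n)
    then show ?case using step rtrancl_into_rtrancl by metis
  qed
  then show ?thesis using step assms(1) unfolding inf_path_def by simp
qed


lemma lift_winning1_remove_cycle_increases_value: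
  assumes str: "strategy E own 1 \<tau>"
    and win: "\<forall>p. inf_path (restr E own 1 \<tau>) s p \<longrightarrow> \<not> parity_win0 col p"
    and path: "fin_path (restr Ebot obot 1 (lift \<tau>)) (a @ y # b @ y # c)"
    and start: "hd (a @ y # b) = Some s"
  shows "prof_less d (fin_value col d (a @ y # b @ y # c)) (fin_value col d (a @ y # c))"
proof -
  let ?R = "restr Ebot obot 1 (lift \<tau>)" and ?cyc = "y # b"
  have \<tau>E: "\<tau> \<subseteq> E" using str unfolding strategy_def by blast
  have "fin_path ?R ((a @ ?cyc @ [hd ?cyc]) @ c)" using path by simp
  then have lasso_path: "fin_path ?R (a @ ?cyc @ [hd ?cyc])" by (rule fin_path_appendD1) simp
  then have "inf_path ?R (Some s) (lasso a ?cyc)" using inf_path_lasso start by fastforce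
  then have "\<not> parity_win0 col (the \<circ> lasso a ?cyc)"
    using win inf_path_lift \<tau>E by blast
  then have "odd (Max ((\<lambda>x. col (the x)) ` set ?cyc))"
    unfolding parity_win0_def using limit_values_lasso[of ?cyc "\<lambda>x. col (the x)" a] by simp
  moreover have "set ?cyc \<subseteq> Some ` V"
    using fin_path_Ebot_butlast[OF lasso_path restr_lift_subset[OF \<tau>E]]
    by (auto simp: butlast_append)
  then have "None \<notin> set ?cyc" "\<forall>x\<in>set ?cyc. col (the x) < d"
    using col_less by auto
  ultimately show ?thesis
    using fin_value_remove_odd_cycle[of ?cyc col d a "y # c"] by simp
qed

lemma lift_winning1_fin_value_not_above_bound:
  assumes str: "strategy E own 1 \<tau>"
    and win: "\<forall>p. inf_path (restr E own 1 \<tau>) s p \<longrightarrow> \<not> parity_win0 col p"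
  shows "fin_path (restr Ebot obot 1 (lift \<tau>)) xs \<Longrightarrow> hd xs = Some s \<Longrightarrow> last xs = None
    \<Longrightarrow> \<not> prof_less d bound (fin_value col d xs)"
proof (induction "length xs" arbitrary: xs rule: less_induct)
  case less
  let ?R = "restr Ebot obot 1 (lift \<tau>)"
  have sub: "?R \<subseteq> Ebot" using str restr_lift_subset unfolding strategy_def by blast
  show ?case
  proof (cases "distinct xs")
    case True
    then show ?thesis
      using not_bound_less_acyclic_path fin_path_mono[OF sub less.prems(1)] less.prems(3) by blast
  next
    case False
    then obtain a y b c where xs: "xs = a @ y # b @ y # c"
      using not_distinct_decomp by fastforce
    have "y \<noteq> None"
      using fin_path_Ebot_butlast[OF less.prems(1) sub] xs by (auto simp: butlast_append)
    then have "last (a @ y # c) = None" using less.prems(3) xs by (cases c) auto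
    moreover have "hd (a @ y # c) = Some s" "hd (a @ y # b) = Some s"
      using less.prems(2) xs by (cases a; simp)+
    moreover have "fin_path ?R (a @ y # c)"
      using less.prems(1) xs by (simp add: fin_path_remove_cycle)
    ultimately have "\<not> prof_less d bound (fin_value col d (a @ y # c))"
      and "prof_less d (fin_value col d xs) (fin_value col d (a @ y # c))"
      using less.hyps less.prems(1) xs
        lift_winning1_remove_cycle_increases_value[OF str win] by simp_all
    then show ?thesis using prof_less_trans by blast
  qed
qed

lemma wins_escape_if_wins_parity0:
  assumes "s \<in> V" "wins_parity E own col 0 s"
  shows "wins_escape V E own col d 0 s"
proof -
  obtain \<sigma> where \<sigma>: "strategy E own 0 \<sigma>"
    and win: "\<forall>p. inf_path (restr E own 0 \<sigma>) s p \<longrightarrow> parity_win0 col p"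
    using assms(2) unfolding wins_parity_def by auto
  have "\<sigma> \<subseteq> E" using \<sigma> unfolding strategy_def by blast
  then have "prof_less d bound (inf_value col p)"
    if "inf_path (restr Ebot obot 0 (lift \<sigma>)) (Some s) p" for p
    using that win inf_path_lift bound_less_PosInf unfolding inf_value_def by simp
  then show ?thesis
    using strategy_lift[OF \<sigma>] no_fin_max_path_lift0[OF \<sigma> assms(1)]
    unfolding wins_escape_def Let_def by auto
qed

lemma wins_escape_if_wins_parity1:
  assumes "s \<in> V" "wins_parity E own col 1 s"
  shows "wins_escape V E own col d 1 s"
proof -
  obtain \<sigma> where \<sigma>: "strategy E own 1 \<sigma>"
    and win: "\<forall>p. inf_path (restr E own 1 \<sigma>) s p \<longrightarrow> \<not> parity_win0 col p"
    using assms(2) unfolding wins_parity_def by auto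
  have "\<sigma> \<subseteq> E" using \<sigma> unfolding strategy_def by blast
  then have "\<not> prof_less d bound (inf_value col p)"
    if "inf_path (restr Ebot obot 1 (lift \<sigma>)) (Some s) p" for p
    using that win inf_path_lift not_prof_less_NegInf unfolding inf_value_def by simp
  moreover have "\<not> prof_less d bound (fin_value col d xs)"
    if "fin_max_path (restr Ebot obot 1 (lift \<sigma>)) (Some s) xs" for xs
    using that fin_max_path_lift_ends_in_bot[OF \<sigma> assms(1)]
      lift_winning1_fin_value_not_above_bound[OF \<sigma> win]
    unfolding fin_max_path_def by blast
  ultimately show ?thesis
    using strategy_lift[OF \<sigma>] unfolding wins_escape_def Let_def by auto
qed

lemma wins_parity_if_wins_escape1:
  assumes "wins_escape V E own col d 1 s"
  shows "wins_parity E own col 1 s"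
proof -
  obtain \<tau> where \<tau>: "strategy Ebot obot 1 \<tau>"
    and win: "\<forall>p. inf_path (restr Ebot obot 1 \<tau>) (Some s) p \<longrightarrow>
      \<not> prof_less d bound (inf_value col p)"
    using assms unfolding wins_escape_def Let_def by auto
  have "\<not> parity_win0 col q" if "inf_path (restr E own 1 (unlift E own 1 \<tau>)) s q" for q
  proof
    assume "parity_win0 col q"
    then have "inf_value col (Some \<circ> q) = PosInf" by (simp add: inf_value_def comp_def)
    then show False
      using win inf_path_unlift1[OF \<tau> that] bound_less_PosInf by auto
  qed
  then show ?thesis
    using strategy_unlift[OF \<tau>] unfolding wins_parity_def by auto
qed

lemma winning_escape0_never_escapes:
  assumes "strategy Ebot obot 0 \<tau>"
    and win: "\<forall>xs. fin_max_path (restr Ebot obot 0 \<tau>) (Some s) xs \<longrightarrow>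
      prof_less d bound (fin_value col d xs)"
    and reach: "(Some s, x) \<in> (restr Ebot obot 0 \<tau>)\<^sup>*"
  shows "(x, None) \<notin> \<tau>"
proof
  let ?R = "restr Ebot obot 0 \<tau>"
  have "\<tau> \<subseteq> Ebot" using assms(1) unfolding strategy_def by blast
  then have sub: "?R \<subseteq> Ebot" unfolding restr_def by blast
  assume "(x, None) \<in> \<tau>"
  then have "(x, None) \<in> ?R" unfolding restr_def by (rule UnI2)
  with reach have "(Some s, None) \<in> ?R\<^sup>*" by (rule rtrancl_into_rtrancl)
  then obtain xs where xs: "fin_path ?R xs" "hd xs = Some s" "last xs = None" "distinct xs"
    using rtrancl_imp_distinct_fin_path by metis
  have "(None, w) \<notin> ?R" for w using sub None_notin_Ebot by blast
  then have "fin_max_path ?R (Some s) xs"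
    using xs(1-3) unfolding fin_max_path_def by simp
  then have "prof_less d bound (fin_value col d xs)" using win by blast
  moreover have "fin_path Ebot xs" using fin_path_mono[OF sub xs(1)] .
  ultimately show False
    using not_bound_less_acyclic_path xs(3,4) by blast
qed

lemma wins_parity_if_wins_escape0:
  assumes "wins_escape V E own col d 0 s"
  shows "wins_parity E own col 0 s"
proof -
  obtain \<tau> where \<tau>: "strategy Ebot obot 0 \<tau>"
    and win_inf: "\<forall>p. inf_path (restr Ebot obot 0 \<tau>) (Some s) p \<longrightarrow>
      prof_less d bound (inf_value col p)"
    and win_fin: "\<forall>xs. fin_max_path (restr Ebot obot 0 \<tau>) (Some s) xs \<longrightarrow>
      prof_less d bound (fin_value col d xs)"
    using assms unfolding wins_escape_def Let_def by auto
  have "parity_win0 col q" if "inf_path (restr E own 0 (unlift E own 0 \<tau>)) s q" for q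
  proof (rule ccontr)
    assume "\<not> parity_win0 col q"
    then have "inf_value col (Some \<circ> q) = NegInf" by (simp add: inf_value_def comp_def)
    moreover have "inf_path (restr Ebot obot 0 \<tau>) (Some s) (Some \<circ> q)"
      using inf_path_unlift0 that winning_escape0_never_escapes[OF \<tau> win_fin] by blast
    ultimately show False using win_inf not_prof_less_NegInf by metis
  qed
  then show ?thesis
    using strategy_unlift[OF \<tau>] unfolding wins_parity_def by auto
qed

lemma wins_parity_iff_wins_escape:
  assumes "i \<in> {0, 1}" "s \<in> V"
  shows "wins_parity E own col i s \<longleftrightarrow> wins_escape V E own col d i s"
proof (cases "i = 0")
  case True
  then show ?thesis
    using assms(2) wins_escape_if_wins_parity0 wins_parity_if_wins_escape0 by blast
next
  case False
  then have "i = 1" using assms(1) by simp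
  then show ?thesis
    using assms(2) wins_escape_if_wins_parity1 wins_parity_if_wins_escape1 by blast
qed

end

theorem mainTheorem4:
  fixes V :: "'v set" and E :: "('v \<times> 'v) set" and own col :: "'v \<Rightarrow> nat"
    and d i :: nat and s :: 'v
  assumes "parity_arena V E own col d"
    and "i \<in> {0, 1}"
    and "s \<in> V"
  shows "wins_parity E own col i s \<longleftrightarrow> wins_escape V E own col d i s"
  using arena.wins_parity_iff_wins_escape[OF arena.intro, OF assms] .

end
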